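(* Let $A\in\mathbb R^{m\times n}$, $D\in\mathbb R^{r\times n}$, $a\in\mathbb R^m$, $\lambda,\mu\in\mathbb R^r$ with $\lambda,\mu>0$, and let $\Omega$ be either $\mathbb R^n_+$ or $\{x:0\le x\le\gamma\}$ for some $\gamma\in\mathbb R^n$ with $\gamma>0$. Then the primal problem $$\min_{x\in\Omega}\ \tfrac12\|Ax-a\|^2+\sum_{i=1}^r\lambda_i\mathbf 1_{\{(Dx)_i\neq0\}}$$ has a global minimizer, and the corresponding dual problem has a global minimizer, where the dual problem is $$\min_{y\in\mathbb R^m,z\in\mathbb R^r}\ \big\langle\max\{-A^\top y-D^\top z,0\},\gamma\big\rangle+\tfrac12\|y\|^2+\langle a,y\rangle+\Psi_{0,\mu}(z)$$ when $\Omega=\{x:0\le x\le\gamma\}$ (max taken componentwise), and $$\min_{y\in\mathbb R^m,z\in\mathbb R^r}\ \tfrac12\|y\|^2+\langle a,y\rangle+\Psi_{0,\mu}(z)\quad\text{s.t.}\quad A^\top y+D^\top z\ge0$$ when $\Omega=\mathbb R^n_+$.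
   Context: $\Psi_{0,\mu}(z)=\sum_{i=1}^r\mu_i\mathbf 1_{\{z_i\ne0\}}$, where $\mathbf 1_{\{\cdot\}}$ is $1$ if the condition holds and $0$ otherwise. Vector inequalities are componentwise. *)

theory Defs
  imports "HOL-Analysis.Analysis"
begin

definition Psi0 :: "real^'r \<Rightarrow> real^'r \<Rightarrow> real" where
  "Psi0 mu z = (\<Sum>i\<in>UNIV. mu $ i * (if z $ i \<noteq> 0 then 1 else 0))"

definition primal_obj :: "real^'n^'m \<Rightarrow> real^'m \<Rightarrow> real^'n^'r \<Rightarrow> real^'r \<Rightarrow> real^'n \<Rightarrow> real" where
  "primal_obj A a D lam x = (1/2) * (norm (A *v x - a))\<^sup>2 + Psi0 lam (D *v x)"

definition nonneg_orthant :: "(real^'n) set" where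
  "nonneg_orthant = {x. \<forall>j. 0 \<le> x $ j}"

definition box_set :: "real^'n \<Rightarrow> (real^'n) set" where
  "box_set gam = {x. \<forall>j. 0 \<le> x $ j \<and> x $ j \<le> gam $ j}"

definition dual_obj_box :: "real^'n^'m \<Rightarrow> real^'m \<Rightarrow> real^'n^'r \<Rightarrow> real^'r \<Rightarrow> real^'n
    \<Rightarrow> real^'m \<Rightarrow> real^'r \<Rightarrow> real" where
  "dual_obj_box A a D mu gam y z =
     (\<Sum>j\<in>UNIV. max (- (transpose A *v y) $ j - (transpose D *v z) $ j) 0 * gam $ j)
     + (1/2) * (norm y)\<^sup>2 + a \<bullet> y + Psi0 mu z"

definition dual_obj_orth :: "real^'m \<Rightarrow> real^'r \<Rightarrow> real^'m \<Rightarrow> real^'r \<Rightarrow> real" where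
  "dual_obj_orth a mu y z = (1/2) * (norm y)\<^sup>2 + a \<bullet> y + Psi0 mu z"

definition dual_feas_orth :: "real^'n^'m \<Rightarrow> real^'n^'r \<Rightarrow> ((real^'m) \<times> (real^'r)) set" where
  "dual_feas_orth A D = {(y, z). \<forall>j. 0 \<le> (transpose A *v y + transpose D *v z) $ j}"

definition has_global_min :: "('a \<Rightarrow> real) \<Rightarrow> 'a set \<Rightarrow> bool" where
  "has_global_min f S \<longleftrightarrow> (\<exists>x\<in>S. \<forall>x'\<in>S. f x \<le> f x')"

end

theory Submission
  imports Defs
begin

text \<open>Since \<open>Psi0 mu\<close> only sees the zero pattern of its argument, it suffices to minimise the
  smooth part of each objective over every "stratum" where a prescribed set \<open>T\<close> of
  coordinates vanishes, and then take the best of the finitely many \<open>T\<close>: for any point \<open>x\<close>,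
  the stratum of its own zero pattern already costs at most the objective at \<open>x\<close>.
  On a stratum the smooth part is a squared distance or a coercive quadratic, so a minimiser
  exists once the relevant feasible set is closed. These sets are linear images of polyhedral
  cones contained in an orthant; such a cone is the conic hull of the polytope cut off by
  \<open>\<Sum>x\<^sub>j \<le> 1\<close>, and conic hulls of polytopes are closed.\<close>

lemma Psi0_eq_sum_nonzero: "Psi0 mu v = (\<Sum>i\<in>-{i. v $ i = 0}. mu $ i)"
proof -
  have "Psi0 mu v = (\<Sum>i\<in>UNIV. if v $ i \<noteq> 0 then mu $ i else 0)"
    unfolding Psi0_def by (rule sum.cong) auto
  also have "\<dots> = (\<Sum>i\<in>-{i. v $ i = 0}. mu $ i)"
    by (simp add: sum.If_cases Collect_neg_eq)
  finally show ?thesis .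
qed

lemma Psi0_le_sum_outside:
  assumes "\<forall>i. 0 \<le> mu $ i" and "\<forall>i\<in>T. v $ i = 0"
  shows "Psi0 mu v \<le> (\<Sum>i\<in>-T. mu $ i)"
  unfolding Psi0_eq_sum_nonzero by (rule sum_mono2) (use assms in auto)

lemma has_global_min_add_Psi0:
  fixes g :: "'a \<Rightarrow> real" and L :: "'a \<Rightarrow> real^'r"
  assumes mu: "\<forall>i. 0 \<le> mu $ i"
    and min_on_pattern: "\<And>T. has_global_min g {x\<in>S. \<forall>i\<in>T. L x $ i = 0}"
  shows "has_global_min (\<lambda>x. g x + Psi0 mu (L x)) S"
proof -
  define stratum where "stratum T = {x\<in>S. \<forall>i\<in>T. L x $ i = 0}" for T
  have "\<forall>T. \<exists>x. x \<in> stratum T \<and> (\<forall>x'\<in>stratum T. g x \<le> g x')"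
    using min_on_pattern unfolding has_global_min_def stratum_def by blast
  then obtain xT where xT: "\<And>T. xT T \<in> stratum T" and xT_min: "\<And>T x. x \<in> stratum T \<Longrightarrow> g (xT T) \<le> g x"
    by (metis choice)
  define c where "c T = g (xT T) + (\<Sum>i\<in>-T. mu $ i)" for T :: "'r set"
  obtain T0 where T0: "\<And>T. c T0 \<le> c T"
    using ex_is_arg_min_if_finite[of UNIV c] by (auto simp: is_arg_min_linorder)
  show ?thesis unfolding has_global_min_def
  proof (intro bexI ballI)
    fix x assume "x \<in> S"
    define Z where "Z = {i. L x $ i = 0}"
    have "g (xT T0) + Psi0 mu (L (xT T0)) \<le> c T0"
      using Psi0_le_sum_outside[OF mu] xT[of T0] by (simp add: c_def stratum_def)
    also have "\<dots> \<le> c Z" by (rule T0)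
    also have "\<dots> \<le> g x + Psi0 mu (L x)"
      using xT_min[of x Z] \<open>x \<in> S\<close> by (simp add: c_def Z_def stratum_def Psi0_eq_sum_nonzero)
    finally show "g (xT T0) + Psi0 mu (L (xT T0)) \<le> g x + Psi0 mu (L x)" .
  qed (use xT in \<open>simp add: stratum_def\<close>)
qed

lemma has_global_min_transfer:
  assumes "has_global_min F E"
    and "\<And>e. e \<in> E \<Longrightarrow> \<exists>s\<in>S. G s \<le> F e"
    and "\<And>s. s \<in> S \<Longrightarrow> \<exists>e\<in>E. F e \<le> G s"
  shows "has_global_min G S"
  using assms unfolding has_global_min_def by (meson order_trans)

lemma has_global_min_bounded_sublevel:
  fixes F :: "'a::{heine_borel,real_normed_vector} \<Rightarrow> real"
  assumes "closed S" and "x0 \<in> S" and "continuous_on S F"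
    and bounded: "\<And>x. x \<in> S \<Longrightarrow> F x \<le> F x0 \<Longrightarrow> norm x \<le> B"
  shows "has_global_min F S"
proof -
  let ?K = "S \<inter> cball 0 B"
  have "compact ?K" using assms(1) by (intro closed_Int_compact compact_cball)
  moreover have "x0 \<in> ?K" using bounded[of x0] assms(2) by simp
  moreover have "continuous_on ?K F" using assms(3) continuous_on_subset by blast
  ultimately obtain x1 where x1: "x1 \<in> ?K" "\<And>y. y \<in> ?K \<Longrightarrow> F x1 \<le> F y"
    using continuous_attains_inf[of ?K F] by blast
  have "F x1 \<le> F x" if "x \<in> S" for x
  proof (cases "F x \<le> F x0")
    case True then show ?thesis using bounded[OF that] that x1(2) by simp
  next
    case False then show ?thesis using x1(2)[OF \<open>x0 \<in> ?K\<close>] by linarith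
  qed
  then show ?thesis unfolding has_global_min_def using x1(1) by blast
qed

lemma has_global_min_half_sq_dist:
  fixes S :: "'a::{heine_borel,real_normed_vector} set"
  assumes "closed S" and "S \<noteq> {}"
  shows "has_global_min (\<lambda>x. (1/2) * (norm (x - c))\<^sup>2 + k) S"
proof -
  obtain x where "x \<in> S" and x_min: "\<And>y. y \<in> S \<Longrightarrow> norm (x - c) \<le> norm (y - c)"
    using distance_attains_inf[OF assms, of c] unfolding dist_norm norm_minus_commute[of c] by blast
  show ?thesis unfolding has_global_min_def
  proof (intro bexI ballI)
    fix y assume "y \<in> S"
    then have "(norm (x - c))\<^sup>2 \<le> (norm (y - c))\<^sup>2" by (simp add: x_min power_mono)
    then show "(1/2) * (norm (x - c))\<^sup>2 + k \<le> (1/2) * (norm (y - c))\<^sup>2 + k" by simp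
  qed fact
qed

lemma half_sq_norm_plus_inner_eq:
  fixes y a :: "'a::real_inner"
  shows "(1/2) * (norm y)\<^sup>2 + a \<bullet> y = (1/2) * (norm (y + a))\<^sup>2 - (1/2) * (norm a)\<^sup>2"
  by (simp add: power2_norm_eq_inner inner_add inner_commute algebra_simps)

lemma has_global_min_half_sq_norm_plus_inner:
  fixes S :: "'a::{heine_borel,real_inner} set"
  assumes "closed S" and "S \<noteq> {}"
  shows "has_global_min (\<lambda>y. (1/2) * (norm y)\<^sup>2 + a \<bullet> y) S"
  unfolding half_sq_norm_plus_inner_eq
  using has_global_min_half_sq_dist[OF assms, of "- a" "- (1/2) * (norm a)\<^sup>2"] by simp

lemma half_sq_norm_plus_inner_sublevel:
  fixes y a :: "'a::real_inner"
  assumes "(1/2) * (norm y)\<^sup>2 + a \<bullet> y + t \<le> 0" and "0 \<le> t"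
  shows "norm y \<le> 2 * norm a" and "t \<le> (1/2) * (norm a)\<^sup>2"
proof -
  have *: "(1/2) * (norm (y + a))\<^sup>2 + t \<le> (1/2) * (norm a)\<^sup>2"
    using assms(1) unfolding half_sq_norm_plus_inner_eq by linarith
  then have "(norm (y + a))\<^sup>2 \<le> (norm a)\<^sup>2" using assms(2) by linarith
  then have "norm (y + a) \<le> norm a" by (rule power2_le_imp_le) simp
  moreover have "norm y \<le> norm (y + a) + norm a"
    using norm_triangle_ineq4[of "y + a" a] by simp
  ultimately show "norm y \<le> 2 * norm a" by linarith
  show "t \<le> (1/2) * (norm a)\<^sup>2"
    using * zero_le_power2[of "norm (y + a)"] by linarith
qed

lemma polyhedron_nonneg_orthant: "polyhedron (nonneg_orthant :: (real^'n) set)"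
proof -
  have "nonneg_orthant = (\<Inter>j. {x::real^'n. axis j 1 \<bullet> x \<ge> 0})"
    by (auto simp: nonneg_orthant_def inner_axis')
  also have "polyhedron \<dots>"
    by (rule polyhedron_Inter) (auto intro: polyhedron_halfspace_ge)
  finally show ?thesis .
qed

lemma subspace_components_vanish:
  fixes f :: "'a::real_vector \<Rightarrow> real^'r"
  assumes "linear f"
  shows "subspace {x. \<forall>i\<in>T. f x $ i = 0}"
  using assms by (auto simp: subspace_def linear_0 linear_add linear_scale)

lemma polyhedron_components_vanish:
  fixes f :: "'a::euclidean_space \<Rightarrow> real^'r"
  assumes "linear f"
  shows "polyhedron {x. \<forall>i\<in>T. f x $ i = 0}"
  using subspace_components_vanish[OF assms]
  by (intro affine_imp_polyhedron subspace_imp_affine)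

lemma polytope_orthant_slice:
  fixes P :: "(real^'n) set"
  assumes "polyhedron P" and "P \<subseteq> nonneg_orthant"
  shows "polytope (P \<inter> {x. (\<Sum>j\<in>UNIV. x $ j) \<le> 1})"
proof -
  have "{x::real^'n. (\<Sum>j\<in>UNIV. x $ j) \<le> 1} = {x. (\<chi> j. 1) \<bullet> x \<le> 1}"
    by (simp add: inner_vec_def)
  then have "polyhedron (P \<inter> {x. (\<Sum>j\<in>UNIV. x $ j) \<le> 1})"
    using assms(1) polyhedron_halfspace_le by auto
  moreover have "bounded (P \<inter> {x. (\<Sum>j\<in>UNIV. x $ j) \<le> 1})"
    unfolding bounded_iff
  proof (intro exI ballI)
    fix x assume x: "x \<in> P \<inter> {x. (\<Sum>j\<in>UNIV. x $ j) \<le> 1}"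
    then have "\<forall>j. 0 \<le> x $ j" using assms(2) by (auto simp: nonneg_orthant_def)
    then have "norm x \<le> (\<Sum>j\<in>UNIV. x $ j)" using norm_le_l1_cart[of x] by simp
    with x show "norm x \<le> 1" by simp
  qed
  ultimately show ?thesis by (simp add: polytope_eq_bounded_polyhedron)
qed

lemma conic_hull_orthant_slice:
  fixes P :: "(real^'n) set"
  assumes "conic P" and "P \<subseteq> nonneg_orthant"
  shows "conic hull (P \<inter> {x. (\<Sum>j\<in>UNIV. x $ j) \<le> 1}) = P"
proof
  show "conic hull (P \<inter> {x. (\<Sum>j\<in>UNIV. x $ j) \<le> 1}) \<subseteq> P"
    by (rule hull_minimal) (use assms(1) in auto)
  show "P \<subseteq> conic hull (P \<inter> {x. (\<Sum>j\<in>UNIV. x $ j) \<le> 1})"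
  proof
    fix x assume "x \<in> P"
    define t where "t = max 1 (\<Sum>j\<in>UNIV. x $ j)"
    have "t > 0" by (simp add: t_def)
    have "inverse t *\<^sub>R x \<in> P" using conicD[OF assms(1) \<open>x \<in> P\<close>] \<open>t > 0\<close> by simp
    moreover have "(\<Sum>j\<in>UNIV. (inverse t *\<^sub>R x) $ j) = inverse t * (\<Sum>j\<in>UNIV. x $ j)"
      by (simp add: sum_distrib_left)
    moreover have "inverse t * (\<Sum>j\<in>UNIV. x $ j) \<le> 1"
      using \<open>t > 0\<close> by (simp add: t_def inverse_eq_divide)
    moreover have "x = t *\<^sub>R (inverse t *\<^sub>R x)" using \<open>t > 0\<close> by simp
    ultimately show "x \<in> conic hull (P \<inter> {x. (\<Sum>j\<in>UNIV. x $ j) \<le> 1})"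
      unfolding conic_hull_explicit using \<open>t > 0\<close> by (intro CollectI exI[of _ t] exI[of _ "inverse t *\<^sub>R x"]) simp
  qed
qed

lemma closed_linear_image_orthant_cone:
  fixes P :: "(real^'n) set" and f :: "real^'n \<Rightarrow> 'b::euclidean_space"
  assumes "polyhedron P" and "conic P" and "P \<subseteq> nonneg_orthant" and "linear f"
  shows "closed (f ` P)"
proof -
  let ?B = "P \<inter> {x. (\<Sum>j\<in>UNIV. x $ j) \<le> 1}"
  have "polytope (f ` ?B)"
    using polytope_linear_image[OF assms(4) polytope_orthant_slice[OF assms(1,3)]] .
  then have "closed (conic hull (f ` ?B))" by (simp add: closed_conic_hull_strong)
  then show ?thesis
    by (simp add: conic_hull_linear_image[OF assms(4)] conic_hull_orthant_slice[OF assms(2,3)])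
qed

text \<open>This is \<open>\<real>\<^sup>n\<^sub>+ + D\<^sup>T {z. z vanishes on T}\<close>: the values of \<open>A\<^sup>T y\<close> for which
  some \<open>z\<close> vanishing on \<open>T\<close> makes \<open>(y, z)\<close> feasible for the orthant dual.\<close>
definition orthant_plus_range :: "real^'n^'r \<Rightarrow> 'r set \<Rightarrow> (real^'n) set" where
  "orthant_plus_range D T = {w. \<exists>z. (\<forall>i\<in>T. z $ i = 0) \<and> (\<forall>j. 0 \<le> (w + transpose D *v z) $ j)}"

lemma closed_orthant_plus_range:
  fixes D :: "real^'n^'r"
  shows "closed (orthant_plus_range D T)"
proof -
  \<comment> \<open>Splitting \<open>z\<close> into positive and negative parts makes the set a linear image of a
    polyhedral cone inside an orthant.\<close>
  define P :: "(real^('n + ('r + 'r))) set"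
    where "P = nonneg_orthant \<inter> {x. \<forall>k\<in>Inr ` (Inl ` T \<union> Inr ` T). x $ k = 0}"
  define f where "f x = (\<chi> j. x $ Inl j) - transpose D *v (\<chi> i. x $ Inr (Inl i) - x $ Inr (Inr i))"
    for x :: "real^('n + ('r + 'r))"
  have "linear f"
    by (intro linearI) (simp_all add: f_def vec_eq_iff matrix_vector_mult_def
        sum.distrib algebra_simps sum_distrib_left sum_subtractf)
  have "polyhedron {x :: real^('n + ('r + 'r)). \<forall>k\<in>Inr ` (Inl ` T \<union> Inr ` T). x $ k = 0}"
    using polyhedron_components_vanish[OF linear_id, of "Inr ` (Inl ` T \<union> Inr ` T)"] by simp
  then have "polyhedron P" unfolding P_def by (intro polyhedron_Int polyhedron_nonneg_orthant)
  moreover have "conic P"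
    by (auto simp: P_def conic_def nonneg_orthant_def)
  moreover have "orthant_plus_range D T = f ` P"
  proof
    show "orthant_plus_range D T \<subseteq> f ` P"
    proof
      fix w assume "w \<in> orthant_plus_range D T"
      then obtain z where z: "\<forall>i\<in>T. z $ i = 0" "\<forall>j. 0 \<le> (w + transpose D *v z) $ j"
        by (auto simp: orthant_plus_range_def)
      define x :: "real^('n + ('r + 'r))" where "x = (\<chi> k. case k of
          Inl j \<Rightarrow> (w + transpose D *v z) $ j
        | Inr (Inl i) \<Rightarrow> max (z $ i) 0
        | Inr (Inr i) \<Rightarrow> max (- z $ i) 0)"
      have "(\<chi> i. x $ Inr (Inl i) - x $ Inr (Inr i)) = z"
        by (simp add: vec_eq_iff x_def max_def)
      moreover have "(\<chi> j. x $ Inl j) = w + transpose D *v z"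
        by (simp add: vec_eq_iff x_def)
      ultimately have "f x = w" by (simp add: f_def)
      moreover have "x \<in> P"
        using z by (auto simp: P_def nonneg_orthant_def x_def split: sum.split)
      ultimately show "w \<in> f ` P" by blast
    qed
    show "f ` P \<subseteq> orthant_plus_range D T"
    proof
      fix w assume "w \<in> f ` P"
      then obtain x where "x \<in> P" and w: "w = f x" by blast
      define z where "z = (\<chi> i. x $ Inr (Inl i) - x $ Inr (Inr i))"
      have "w + transpose D *v z = (\<chi> j. x $ Inl j)" by (simp add: w f_def z_def)
      then show "w \<in> orthant_plus_range D T"
        using \<open>x \<in> P\<close> unfolding orthant_plus_range_def
        by (intro CollectI exI[of _ z]) (auto simp: P_def nonneg_orthant_def z_def)
    qed
  qed
  moreover have "P \<subseteq> nonneg_orthant" by (simp add: P_def)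
  ultimately show ?thesis using closed_linear_image_orthant_cone \<open>linear f\<close> by metis
qed

lemma has_global_min_primal_obj:
  fixes \<Omega> :: "(real^'n) set" and A :: "real^'n^'m" and D :: "real^'n^'r"
  assumes lam: "\<forall>i. 0 \<le> lam $ i" and "0 \<in> \<Omega>"
    and closed_image: "\<And>T. closed ((*v) A ` (\<Omega> \<inter> {x. \<forall>i\<in>T. (D *v x) $ i = 0}))"
  shows "has_global_min (primal_obj A a D lam) \<Omega>"
proof -
  have "has_global_min (\<lambda>x. (1/2) * (norm (A *v x - a))\<^sup>2) {x\<in>\<Omega>. \<forall>i\<in>T. (D *v x) $ i = 0}" for T
  proof (rule has_global_min_transfer)
    let ?U = "(*v) A ` (\<Omega> \<inter> {x. \<forall>i\<in>T. (D *v x) $ i = 0})"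
    show "has_global_min (\<lambda>u. (1/2) * (norm (u - a))\<^sup>2 + 0) ?U"
      by (rule has_global_min_half_sq_dist) (use closed_image \<open>0 \<in> \<Omega>\<close> in auto)
  qed auto
  then show ?thesis
    unfolding primal_obj_def by (rule has_global_min_add_Psi0[OF lam])
qed

lemma has_global_min_primal_orthant:
  assumes "\<forall>i. 0 \<le> lam $ i"
  shows "has_global_min (primal_obj A a D lam) nonneg_orthant"
proof (rule has_global_min_primal_obj[OF assms])
  fix T
  let ?P = "nonneg_orthant \<inter> {x. \<forall>i\<in>T. (D *v x) $ i = 0}"
  have "conic {x. \<forall>i\<in>T. (D *v x) $ i = 0}"
    by (intro subspace_imp_conic subspace_components_vanish matrix_vector_mul_linear)
  then have "conic ?P" unfolding conic_def by (auto simp: nonneg_orthant_def)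
  then show "closed ((*v) A ` ?P)"
    by (intro closed_linear_image_orthant_cone polyhedron_Int polyhedron_nonneg_orthant
        polyhedron_components_vanish matrix_vector_mul_linear) auto
qed (simp add: nonneg_orthant_def)

lemma has_global_min_primal_box:
  assumes "\<forall>i. 0 \<le> lam $ i" and "\<forall>j. 0 \<le> gam $ j"
  shows "has_global_min (primal_obj A a D lam) (box_set gam)"
proof (rule has_global_min_primal_obj[OF assms(1)])
  have "box_set gam = cbox 0 gam" by (auto simp: box_set_def mem_box_cart)
  then have "compact (box_set gam \<inter> {x. \<forall>i\<in>T. (D *v x) $ i = 0})" for T
    by (auto intro!: compact_Int_closed polyhedron_imp_closed polyhedron_components_vanish
        matrix_vector_mul_linear)
  then show "closed ((*v) A ` (box_set gam \<inter> {x. \<forall>i\<in>T. (D *v x) $ i = 0}))" for T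
    by (intro compact_imp_closed compact_continuous_image continuous_on_subset[OF linear_continuous_on]
        matrix_vector_mul_linear) auto
qed (use assms(2) in \<open>simp add: box_set_def\<close>)

lemma has_global_min_dual_orth:
  fixes A :: "real^'n^'m" and D :: "real^'n^'r"
  assumes mu: "\<forall>i. 0 \<le> mu $ i"
  shows "has_global_min (\<lambda>(y, z). dual_obj_orth a mu y z) (dual_feas_orth A D)"
proof -
  have "has_global_min (\<lambda>p. (1/2) * (norm (fst p))\<^sup>2 + a \<bullet> fst p)
      {p \<in> dual_feas_orth A D. \<forall>i\<in>T. snd p $ i = 0}" for T
  proof (rule has_global_min_transfer)
    let ?Y = "(*v) (transpose A) -` orthant_plus_range D T"
    have "closed ?Y"
      by (intro continuous_closed_vimage closed_orthant_plus_range linear_continuous_at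
          matrix_vector_mul_bounded_linear)
    moreover have "0 \<in> ?Y" by (auto simp: orthant_plus_range_def intro!: exI[of _ 0])
    ultimately show "has_global_min (\<lambda>y. (1/2) * (norm y)\<^sup>2 + a \<bullet> y) ?Y"
      by (intro has_global_min_half_sq_norm_plus_inner) blast+
  qed (fastforce simp: orthant_plus_range_def dual_feas_orth_def)+
  then have "has_global_min (\<lambda>p. ((1/2) * (norm (fst p))\<^sup>2 + a \<bullet> fst p) + Psi0 mu (snd p))
      (dual_feas_orth A D)"
    by (rule has_global_min_add_Psi0[OF mu])
  then show ?thesis by (simp add: dual_obj_orth_def case_prod_beta')
qed

text \<open>The slack \<open>s\<close> stands for \<open>max (- (A\<^sup>T y + D\<^sup>T z)) 0\<close>; unlike the box dual itself,
  the relaxed objective is coercive on a closed set.\<close>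
lemma has_global_min_box_relaxation:
  fixes A :: "real^'n^'m" and D :: "real^'n^'r" and gam :: "real^'n"
  assumes gam: "\<forall>j. 0 < gam $ j"
  shows "has_global_min (\<lambda>(y, s). (1/2) * (norm y)\<^sup>2 + a \<bullet> y + (\<Sum>j\<in>UNIV. s $ j * gam $ j))
    {(y, s). s \<in> nonneg_orthant \<and> transpose A *v y + s \<in> orthant_plus_range D T}"
    (is "has_global_min ?F ?E")
proof (rule has_global_min_bounded_sublevel)
  have "bounded_linear (\<lambda>p. transpose A *v fst p + snd p :: real^'n)"
    by (intro bounded_linear_add bounded_linear_compose[OF matrix_vector_mul_bounded_linear]
        bounded_linear_fst bounded_linear_snd)
  then have "closed ((\<lambda>p. transpose A *v fst p + snd p) -` orthant_plus_range D T)"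
    by (intro continuous_closed_vimage closed_orthant_plus_range linear_continuous_at)
  moreover have "closed (UNIV \<times> (nonneg_orthant :: (real^'n) set) :: ((real^'m) \<times> (real^'n)) set)"
    by (intro closed_Times closed_UNIV polyhedron_imp_closed polyhedron_nonneg_orthant)
  moreover have "?E = (UNIV \<times> nonneg_orthant)
      \<inter> (\<lambda>p. transpose A *v fst p + snd p) -` orthant_plus_range D T"
    by auto
  ultimately show "closed ?E" by (simp add: closed_Int)
  show "(0, 0) \<in> ?E"
    by (auto simp: nonneg_orthant_def orthant_plus_range_def intro!: exI[of _ 0])
  show "continuous_on ?E ?F"
    unfolding case_prod_beta' by (intro continuous_intros)
  fix p assume "p \<in> ?E" and "?F p \<le> ?F (0, 0)"
  then obtain y s where p: "p = (y, s)" and s: "\<forall>j. 0 \<le> s $ j"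
    and sub: "(1/2) * (norm y)\<^sup>2 + a \<bullet> y + (\<Sum>j\<in>UNIV. s $ j * gam $ j) \<le> 0"
    by (auto simp: nonneg_orthant_def)
  have terms: "0 \<le> s $ j * gam $ j" for j using s gam by (simp add: less_imp_le)
  note bounds = half_sq_norm_plus_inner_sublevel[OF sub sum_nonneg[OF terms]]
  have s_bound: "\<bar>s $ j\<bar> \<le> (1/2) * (norm a)\<^sup>2 / gam $ j" for j
  proof -
    have "s $ j * gam $ j \<le> (\<Sum>j\<in>UNIV. s $ j * gam $ j)"
      by (rule member_le_sum) (use terms in auto)
    with bounds(2) have "s $ j * gam $ j \<le> (1/2) * (norm a)\<^sup>2" by linarith
    then show ?thesis using s gam by (simp add: pos_le_divide_eq)
  qed
  have "norm s \<le> (\<Sum>j\<in>UNIV. (1/2) * (norm a)\<^sup>2 / gam $ j)"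
    by (rule order_trans[OF norm_le_l1_cart sum_mono]) (rule s_bound)
  then show "norm p \<le> 2 * norm a + (\<Sum>j\<in>UNIV. (1/2) * (norm a)\<^sup>2 / gam $ j)"
    using norm_Pair_le[of y s] bounds(1) p by simp
qed

lemma has_global_min_dual_box:
  fixes A :: "real^'n^'m" and D :: "real^'n^'r" and gam :: "real^'n"
  assumes mu: "\<forall>i. 0 \<le> mu $ i" and gam: "\<forall>j. 0 < gam $ j"
  shows "has_global_min (\<lambda>(y, z). dual_obj_box A a D mu gam y z) UNIV"
proof -
  define slack where "slack y z = (\<chi> j. max (- (transpose A *v y) $ j - (transpose D *v z) $ j) 0)"
    for y z
  define G where "G p = (\<Sum>j\<in>UNIV. slack (fst p) (snd p) $ j * gam $ j)
      + ((1/2) * (norm (fst p))\<^sup>2 + a \<bullet> fst p)" for p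
  have "has_global_min G {p. \<forall>i\<in>T. snd p $ i = 0}" for T
  proof -
    let ?E = "{(y, s). s \<in> nonneg_orthant \<and> transpose A *v y + s \<in> orthant_plus_range D T}"
    let ?F = "\<lambda>(y, s). (1/2) * (norm y)\<^sup>2 + a \<bullet> y + (\<Sum>j\<in>UNIV. s $ j * gam $ j)"
    have "\<exists>p\<in>{p. \<forall>i\<in>T. snd p $ i = 0}. G p \<le> ?F e" if "e \<in> ?E" for e
    proof -
      obtain y s z where e: "e = (y, s)" and s: "\<forall>j. 0 \<le> s $ j" and z: "\<forall>i\<in>T. z $ i = 0"
        and feasible: "\<forall>j. 0 \<le> (transpose A *v y + s + transpose D *v z) $ j"
        using \<open>e \<in> ?E\<close> by (auto simp: nonneg_orthant_def orthant_plus_range_def)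
      have "slack y z $ j \<le> s $ j" for j
        using s spec[OF feasible, of j] by (simp add: slack_def)
      then have "(\<Sum>j\<in>UNIV. slack y z $ j * gam $ j) \<le> (\<Sum>j\<in>UNIV. s $ j * gam $ j)"
        using gam by (intro sum_mono mult_right_mono) (simp_all add: less_imp_le)
      then have "G (y, z) \<le> ?F e" by (simp add: G_def e)
      with z show ?thesis by force
    qed
    moreover have "\<exists>e\<in>?E. ?F e \<le> G p" if "p \<in> {p. \<forall>i\<in>T. snd p $ i = 0}" for p
    proof -
      obtain y z where p: "p = (y, z)" by (cases p)
      with that have z: "\<forall>i\<in>T. z $ i = 0" by simp
      have "slack y z \<in> nonneg_orthant" by (simp add: slack_def nonneg_orthant_def)
      moreover have "0 \<le> (transpose A *v y + slack y z + transpose D *v z) $ j" for j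
        by (simp add: slack_def)
      with z have "transpose A *v y + slack y z \<in> orthant_plus_range D T"
        unfolding orthant_plus_range_def by blast
      ultimately have "(y, slack y z) \<in> ?E" by simp
      moreover have "?F (y, slack y z) = G p" by (simp add: G_def p)
      ultimately show ?thesis by force
    qed
    ultimately show ?thesis
      by (rule has_global_min_transfer[OF has_global_min_box_relaxation[OF gam]])
  qed
  then have "has_global_min (\<lambda>p. G p + Psi0 mu (snd p)) UNIV"
    by (intro has_global_min_add_Psi0[OF mu]) simp
  moreover have "(\<lambda>(y, z). dual_obj_box A a D mu gam y z) = (\<lambda>p. G p + Psi0 mu (snd p))"
    by (auto simp: fun_eq_iff dual_obj_box_def G_def slack_def)
  ultimately show ?thesis by simp
qed

theorem mainTheorem9:
  fixes A :: "real^'n^'m" and D :: "real^'n^'r" and a :: "real^'m"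
    and lam mu :: "real^'r"
  assumes "\<forall>i. lam $ i > 0" and "\<forall>i. mu $ i > 0"
  shows "(has_global_min (primal_obj A a D lam) nonneg_orthant
          \<and> has_global_min (\<lambda>(y, z). dual_obj_orth a mu y z) (dual_feas_orth A D))
       \<and> (\<forall>gam :: real^'n. (\<forall>j. gam $ j > 0) \<longrightarrow>
          has_global_min (primal_obj A a D lam) (box_set gam)
          \<and> has_global_min (\<lambda>(y, z). dual_obj_box A a D mu gam y z) UNIV)"
proof -
  have lam: "\<forall>i. 0 \<le> lam $ i" and mu: "\<forall>i. 0 \<le> mu $ i"
    using assms by (simp_all add: less_imp_le)
  have box: "has_global_min (primal_obj A a D lam) (box_set gam)
      \<and> has_global_min (\<lambda>(y, z). dual_obj_box A a D mu gam y z) UNIV"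
    if "\<forall>j. gam $ j > 0" for gam :: "real^'n"
    using has_global_min_primal_box[OF lam] has_global_min_dual_box[OF mu that] that
    by (blast intro: less_imp_le)
  show ?thesis
    using has_global_min_primal_orthant[OF lam] has_global_min_dual_orth[OF mu] box by blast
qed

end
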